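(* Let $n\ge 6$ and let $K$ be a $2$-dimensional shifted simplicial complex on vertex set $[n]$ with $K\subseteq \Delta(5,n)$. Then $f_2(K)\le 4f_1(K)-8<4f_1(K)$.
   Context: A simplicial complex on vertex set $[n]=\{1,\dots,n\}$ is a nonempty family of subsets of $[n]$ closed under taking subsets; $f_i(K)$ is the number of its members of cardinality $i+1$. $K$ is shifted if for every $F\in K$, every $i\in F$ and every $j<i$ with $j\notin F$, also $(F\setminus\{i\})\cup\{j\}\in K$. For $m\le n$, $\Delta(m,n)$ denotes the pure $(m-1)$-dimensional simplicial complex on $[n]$ whose maximal simplices are exactly the sets $S\subseteq[n]$ with $|S|=m$ such that for every $k\in[n]$: if $k\notin S$ then $\{k+1,k+2,\dots,m-k+2\}\subseteq S$ (the interval being empty when $k+1>m-k+2$). So $\Delta(5,n)$ has maximal simplices the $5$-sets $S$ with ($1\notin S\Rightarrow\{2,\dots,6\}\subseteq S$), ($2\notin S\Rightarrow \{3,4,5\}\subseteq S$), ($3\notin S\Rightarrow 4\in S$). *)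

theory Defs
  imports Main
begin

definition simplicial_complex :: "nat \<Rightarrow> nat set set \<Rightarrow> bool" where
  "simplicial_complex n K \<longleftrightarrow> K \<noteq> {} \<and> (\<forall>F\<in>K. F \<subseteq> {1..n}) \<and> (\<forall>F\<in>K. \<forall>G. G \<subseteq> F \<longrightarrow> G \<in> K)"

definition fnum :: "nat \<Rightarrow> nat set set \<Rightarrow> nat" where
  "fnum i K = card {F\<in>K. card F = i + 1}"

definition has_dim :: "nat \<Rightarrow> nat set set \<Rightarrow> bool" where
  "has_dim d K \<longleftrightarrow> (\<exists>F\<in>K. card F = d + 1) \<and> (\<forall>F\<in>K. finite F \<and> card F \<le> d + 1)"

definition shifted :: "nat \<Rightarrow> nat set set \<Rightarrow> bool" where
  "shifted n K \<longleftrightarrow> (\<forall>F\<in>K. \<forall>i\<in>F. \<forall>j. 1 \<le> j \<and> j < i \<and> j \<notin> F \<longrightarrow> (F - {i}) \<union> {j} \<in> K)"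

definition Delta_facets :: "nat \<Rightarrow> nat \<Rightarrow> nat set set" where
  "Delta_facets m n = {S. S \<subseteq> {1..n} \<and> card S = m \<and>
     (\<forall>k\<in>{1..n}. k \<notin> S \<longrightarrow> {k+1..(m+2)-k} \<subseteq> S)}"

definition Delta :: "nat \<Rightarrow> nat \<Rightarrow> nat set set" where
  "Delta m n = {G. \<exists>S\<in>Delta_facets m n. G \<subseteq> S}"

end

theory Submission
  imports Defs
begin

text \<open>
  Every facet of \<open>\<Delta>(5,n)\<close> has at most two vertices above 4, so every triangle of \<open>K\<close>
  has its least vertex \<open>v \<in> {1..4}\<close>, and removing it leaves an edge of \<open>K\<close> avoiding vertex 1.
  A triangle is determined by that edge and \<open>v\<close>, hence \<open>f\<^sub>2 \<le> 4 e\<close> where \<open>e\<close> counts the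
  edges avoiding 1. Shiftedness moves the least vertex of any triangle to 1, producing two
  edges through 1; thus \<open>e \<le> f\<^sub>1 - 2\<close>.
\<close>

lemma simplicial_complex_finite:
  assumes "simplicial_complex n K"
  shows "finite K"
proof -
  have "K \<subseteq> Pow {1..n}"
    using assms unfolding simplicial_complex_def by blast
  then show ?thesis
    by (rule finite_subset) simp
qed

lemma simplicial_complex_face_Min:
  assumes "simplicial_complex n K" "F \<in> K" "F \<noteq> {}"
  shows "finite F" "Min F \<in> F" "1 \<le> Min F"
proof -
  have "F \<subseteq> {1..n}"
    using assms(1,2) unfolding simplicial_complex_def by blast
  then show "finite F"
    using finite_subset by blast
  then show "Min F \<in> F"
    using assms(3) by simp
  then show "1 \<le> Min F"
    using \<open>F \<subseteq> {1..n}\<close> by auto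
qed

lemma card_Delta5_facet_above_4:
  assumes "S \<in> Delta_facets 5 n"
  shows "card (S - {1..4}) \<le> 2"
proof -
  have S: "S \<subseteq> {1..n}" "card S = 5"
    and cond: "\<And>k. k \<in> {1..n} \<Longrightarrow> k \<notin> S \<Longrightarrow> {k+1..7-k} \<subseteq> S"
    using assms unfolding Delta_facets_def by auto
  have "finite S"
    using S(1) finite_subset by blast
  have "5 \<le> n"
    using card_mono[OF _ S(1)] S(2) by simp
  have small: "card (S \<inter> {1..4}) \<ge> 3"
  proof -
    consider "1 \<notin> S" | "1 \<in> S" "2 \<notin> S" | "1 \<in> S" "2 \<in> S" "3 \<notin> S" | "{1,2,3} \<subseteq> S"
      by blast
    then obtain A where "A \<subseteq> S \<inter> {1..4}" "card A = 3"
    proof cases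
      case 1
      then have "{2..6} \<subseteq> S"
        using cond[of 1] \<open>5 \<le> n\<close> by force
      then show ?thesis
        using that[of "{2,3,4}"] by force
    next
      case 2
      then have "{3..5} \<subseteq> S"
        using cond[of 2] \<open>5 \<le> n\<close> by force
      then show ?thesis
        using that[of "{1,3,4}"] 2 by force
    next
      case 3
      then have "4 \<in> S"
        using cond[of 3] \<open>5 \<le> n\<close> by force
      then show ?thesis
        using that[of "{1,2,4}"] 3 by force
    qed (use that[of "{1,2,3}"] in auto)
    then show ?thesis
      by (metis card_mono finite_Int finite_atLeastAtMost)
  qed
  have "card (S - {1..4}) = card S - card (S \<inter> {1..4})"
    using \<open>finite S\<close> by (metis Diff_Int2 card_Diff_subset_Int finite_Int inf_commute inf_le2)
  then show ?thesis
    using small S(2) by simp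
qed

lemma Delta5_triangle_Min_le_4:
  assumes "T \<in> Delta 5 n" "card T = 3"
  shows "Min T \<le> 4"
proof -
  obtain S where S: "S \<in> Delta_facets 5 n" "T \<subseteq> S"
    using assms(1) unfolding Delta_def by blast
  have "finite S"
    using S(1) finite_subset unfolding Delta_facets_def by blast
  have "\<not> T \<subseteq> S - {1..4}"
  proof
    assume "T \<subseteq> S - {1..4}"
    then have "card T \<le> card (S - {1..4})"
      using \<open>finite S\<close> by (simp add: card_mono)
    then show False
      using card_Delta5_facet_above_4[OF S(1)] assms(2) by simp
  qed
  then obtain x where "x \<in> T" "x \<le> 4"
    using S(2) by auto
  moreover have "finite T"
    using assms(2) card.infinite by fastforce
  ultimately show ?thesis
    using Min_le[of T x] by linarith
qed

lemma shifted_edge_to_1: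
  assumes "shifted n K" "{a, y} \<in> K" "1 \<le> a" "a < y"
  shows "{1, y} \<in> K"
proof (cases "a = 1")
  case False
  then have "({a, y} - {a}) \<union> {1} \<in> K"
    using assms unfolding shifted_def by auto
  moreover have "({a, y} - {a}) \<union> {1} = {1, y}"
    using assms(4) by auto
  ultimately show ?thesis
    by simp
qed (use assms in simp)

lemma shifted_two_edges_through_1:
  assumes "simplicial_complex n K" "shifted n K" "F \<in> K" "card F = 3"
  shows "2 \<le> card {e \<in> K. card e = 2 \<and> 1 \<in> e}"
proof -
  let ?m = "Min F"
  have "F \<noteq> {}"
    using assms(4) by auto
  then have "finite F" "?m \<in> F" "1 \<le> ?m"
    using simplicial_complex_face_Min[OF assms(1,3)] by blast+
  have above: "?m < y" if "y \<in> F - {?m}" for y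
    using that \<open>finite F\<close> by (auto simp: order_less_le)
  have edge: "{1, y} \<in> {e \<in> K. card e = 2 \<and> 1 \<in> e}" if "y \<in> F - {?m}" for y
  proof -
    have "{?m, y} \<subseteq> F"
      using that \<open>?m \<in> F\<close> by blast
    then have "{?m, y} \<in> K"
      using assms(1,3) unfolding simplicial_complex_def by blast
    then have "{1, y} \<in> K"
      using shifted_edge_to_1[OF assms(2)] \<open>1 \<le> ?m\<close> above[OF that] by blast
    moreover have "y \<noteq> 1"
      using \<open>1 \<le> ?m\<close> above[OF that] by simp
    ultimately show ?thesis
      by simp
  qed
  have inj: "inj_on (\<lambda>y. {1, y}) (F - {?m})"
  proof (rule inj_onI)
    fix y z
    assume "y \<in> F - {?m}" "z \<in> F - {?m}" "{1, y} = {1, z}"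
    moreover have "y \<noteq> 1" "z \<noteq> 1"
      using above[of y] above[of z] \<open>1 \<le> ?m\<close> calculation by auto
    ultimately show "y = z"
      by (auto simp: doubleton_eq_iff)
  qed
  have "card (F - {?m}) = 2"
    using assms(4) \<open>?m \<in> F\<close> \<open>finite F\<close> by simp
  moreover have "finite {e \<in> K. card e = 2 \<and> 1 \<in> e}"
    using simplicial_complex_finite[OF assms(1)] by simp
  moreover have "(\<lambda>y. {1, y}) ` (F - {?m}) \<subseteq> {e \<in> K. card e = 2 \<and> 1 \<in> e}"
    using edge by blast
  ultimately show ?thesis
    using card_inj_on_le[OF inj] by simp
qed

lemma Delta5_triangle_remove_Min:
  assumes "simplicial_complex n K" "K \<subseteq> Delta 5 n" "F \<in> K" "card F = 3"
  shows "Min F \<in> {1..4}" "F - {Min F} \<in> {e \<in> K. card e = 2 \<and> 1 \<notin> e}"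
proof -
  have "F \<noteq> {}"
    using assms(4) by auto
  then have "finite F" "Min F \<in> F" "1 \<le> Min F"
    using simplicial_complex_face_Min[OF assms(1,3)] by blast+
  moreover have "Min F \<le> 4"
    using Delta5_triangle_Min_le_4 assms by blast
  ultimately show "Min F \<in> {1..4}"
    by simp
  have "F - {Min F} \<in> K"
    using assms(1,3) unfolding simplicial_complex_def by blast
  moreover have "1 \<notin> F - {Min F}"
    using \<open>finite F\<close> \<open>1 \<le> Min F\<close> by (auto dest: Min_le)
  moreover have "card (F - {Min F}) = 2"
    using assms(4) \<open>Min F \<in> F\<close> \<open>finite F\<close> by simp
  ultimately show "F - {Min F} \<in> {e \<in> K. card e = 2 \<and> 1 \<notin> e}"
    by simp
qed

lemma card_le_mult_card_remove_Min:
  assumes "finite E"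
    and "\<And>F. F \<in> T \<Longrightarrow> finite F \<and> F \<noteq> {} \<and> Min F \<in> {1..m} \<and> F - {Min F} \<in> E"
  shows "card T \<le> m * card E"
proof -
  have "inj_on (\<lambda>F. (F - {Min F}, Min F)) T"
  proof (rule inj_onI)
    fix F G
    assume "F \<in> T" "G \<in> T" and eq: "(F - {Min F}, Min F) = (G - {Min G}, Min G)"
    have "F = insert (Min F) (F - {Min F})" "G = insert (Min G) (G - {Min G})"
      using assms(2)[OF \<open>F \<in> T\<close>] assms(2)[OF \<open>G \<in> T\<close>] by (simp_all add: insert_absorb)
    then show "F = G"
      using eq by (metis prod.inject)
  qed
  moreover have "(\<lambda>F. (F - {Min F}, Min F)) ` T \<subseteq> E \<times> {1..m}"
    using assms(2) by (intro image_subsetI SigmaI) blast+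
  ultimately have "card T \<le> card (E \<times> {1..m})"
    using card_inj_on_le assms(1) by blast
  then show ?thesis
    by (simp add: card_cartesian_product mult.commute)
qed

theorem lemma1p14:
  fixes n :: nat and K :: "nat set set"
  assumes "n \<ge> 6"
    and "simplicial_complex n K"
    and "has_dim 2 K"
    and "shifted n K"
    and "K \<subseteq> Delta 5 n"
  shows "int (fnum 2 K) \<le> 4 * int (fnum 1 K) - 8 \<and> 4 * int (fnum 1 K) - 8 < 4 * int (fnum 1 K)"
proof -
  define E0 where "E0 = {e \<in> K. card e = 2 \<and> 1 \<notin> e}"
  define E1 where "E1 = {e \<in> K. card e = 2 \<and> 1 \<in> e}"
  have "finite K"
    using simplicial_complex_finite[OF assms(2)] .
  have f1: "fnum 1 K = card E0 + card E1"
  proof -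
    have "{F \<in> K. card F = 1 + 1} = E0 \<union> E1"
      unfolding E0_def E1_def by auto
    then show ?thesis
      unfolding fnum_def using \<open>finite K\<close>
      by (simp add: card_Un_disjoint E0_def E1_def disjoint_iff)
  qed
  obtain F0 where "F0 \<in> K" "card F0 = 3"
    using assms(3) unfolding has_dim_def by auto
  then have "2 \<le> card E1"
    unfolding E1_def using shifted_two_edges_through_1 assms(2,4) by blast
  have "fnum 2 K \<le> 4 * card E0"
    unfolding fnum_def
  proof (rule card_le_mult_card_remove_Min)
    show "finite E0"
      unfolding E0_def using \<open>finite K\<close> by simp
  next
    fix F
    assume "F \<in> {F \<in> K. card F = 2 + 1}"
    then have "F \<in> K" "card F = 3" "F \<noteq> {}"
      by auto
    then show "finite F \<and> F \<noteq> {} \<and> Min F \<in> {1..4} \<and> F - {Min F} \<in> E0"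
      using Delta5_triangle_remove_Min[OF assms(2,5)] simplicial_complex_face_Min(1)[OF assms(2)]
      unfolding E0_def by blast
  qed
  then show ?thesis
    using f1 \<open>2 \<le> card E1\<close> by linarith
qed

end
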